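(* Let $N,d\in\mathbb{N}^*$, $\alpha>0$, and for $i\neq j$ let $\Psi_{ij}:\mathbb{R}^{2dN}\to\mathbb{R}_+$ be non-negative, bounded and locally Lipschitz. Let $(x_i,v_i)_i$ be a solution on $\mathbb{R}_+$ of $\frac{dx_i}{dt}=v_i$, $\frac{dv_i}{dt}=\alpha\sum_jQ_t(i,j)(v_j-v_i)$, where $Q_t(i,j)=\Psi_{ij}((x_k(t),v_k(t))_k)$ for $i\ne j$ and $Q_t(i,i)=-\sum_{j\ne i}Q_t(i,j)$, and let $(P^*_{s,t})_{0\le s\le t}$ be the solution on $\mathbb{R}_+$ of $P^*_{t,t}=I$, $\partial_tP^*_{s,t}=\alpha Q_tP^*_{s,t}$, $\partial_sP^*_{s,t}=-\alpha P^*_{s,t}Q_s$. Suppose there exists $C:\mathbb{R}_+^2\to\mathbb{R}_+$ such that (a) for all $t\ge0$, $r\mapsto C(t,r)$ is increasing; (b) for all $r\ge X(0)$, $C(t,r)\to0$ as $t\to+\infty$; (c) for all $t\ge0$, $1-\mu(P^*_{0,t})\le C(t,\sup_{s\le t}X(s))$. If there exists $r_0\ge X(0)$ with $$r_0-X(0)>V(0)\int_0^{+\infty}C(s,r_0)\,ds,$$ then the solution flocks: $\sup_{t\ge0}X(t)<+\infty$ and $V(t)\to0$ as $t\to+\infty$.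
   Context: $X(t)=\sup_{i,j}\|x_i(t)-x_j(t)\|_2$, $V(t)=\sup_{i,j}\|v_i(t)-v_j(t)\|_2$. The Dobrushin ergodicity coefficient of a stochastic matrix $P$ is $\mu(P)=\inf_{i,j}\sum_kP(i,k)\wedge P(j,k)$, with $a\wedge b=\min(a,b)$. *)

theory Defs
  imports "HOL-Analysis.Analysis"
begin

text \<open>Agents are indexed by a finite type 'n (N = CARD('n)), space is real^'d (d = CARD('d)).
A configuration ((x_k, v_k))_k \<in> R^{2dN} is an element of ((real^'d) \<times> (real^'d))^'n.\<close>

definition config :: "('n::finite \<Rightarrow> real \<Rightarrow> real^'d) \<Rightarrow> ('n \<Rightarrow> real \<Rightarrow> real^'d)
    \<Rightarrow> real \<Rightarrow> ((real^'d) \<times> (real^'d))^'n" where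
  "config x v t = (\<chi> k. (x k t, v k t))"

definition Qmat :: "('n::finite \<Rightarrow> 'n \<Rightarrow> ((real^'d) \<times> (real^'d))^'n \<Rightarrow> real)
    \<Rightarrow> ('n \<Rightarrow> real \<Rightarrow> real^'d) \<Rightarrow> ('n \<Rightarrow> real \<Rightarrow> real^'d) \<Rightarrow> real \<Rightarrow> real^'n^'n" where
  "Qmat \<Psi> x v t = (\<chi> i j. if i = j then - (\<Sum>k\<in>UNIV - {i}. \<Psi> i k (config x v t))
                              else \<Psi> i j (config x v t))"

text \<open>Position and velocity diameters X(t), V(t).\<close>
definition diam_fun :: "('n::finite \<Rightarrow> real \<Rightarrow> real^'d) \<Rightarrow> real \<Rightarrow> real" where
  "diam_fun x t = (SUP i. SUP j. norm (x i t - x j t))"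

definition dobrushin :: "real^'n::finite^'n \<Rightarrow> real" where
  "dobrushin P = (INF i. INF j. \<Sum>k\<in>UNIV. min (P $ i $ k) (P $ j $ k))"

definition locally_lipschitz :: "('a::metric_space \<Rightarrow> 'b::metric_space) \<Rightarrow> bool" where
  "locally_lipschitz f \<longleftrightarrow> (\<forall>z. \<exists>e>0. \<exists>L. L-lipschitz_on (ball z e) f)"

end

theory Submission
  imports Defs
begin

text \<open>Since the rows of \<open>Q\<^sub>t\<close> sum to zero, the velocity equation is the linear system
\<open>v' = \<alpha> Q\<^sub>t v\<close>, and the backward equation makes \<open>s \<mapsto> P*(s,t) v(s)\<close> constant. Hence
\<open>v(t) = P*(0,t) v(0)\<close>, where \<open>P*(0,t)\<close> has unit row sums. Removing from rows \<open>i\<close> and \<open>j\<close> their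
common part \<open>min (P(i,k)) (P(j,k))\<close> leaves two non-negative weight vectors of mass \<open>1 - \<Sum>\<^sub>k min \<dots>\<close>,
so \<open>V(t) \<le> (1 - \<mu>(P*(0,t))) V(0) \<le> C(t, sup X|[0,t]) V(0)\<close>.
A continuity argument then keeps \<open>X < r\<^sub>0\<close> forever: while it holds, \<open>V(s) \<le> V(0) C(s,r\<^sub>0)\<close>, and
integrating gives \<open>X(t) \<le> X(0) + V(0) \<integral> C(s,r\<^sub>0) ds < r\<^sub>0\<close>. Finally \<open>V(t) \<le> V(0) C(t,r\<^sub>0) \<rightarrow> 0\<close>.\<close>

lemma norm_le_diam_fun: "norm (x i t - x j t) \<le> diam_fun x t"
  unfolding diam_fun_def
  by (rule cSUP_upper2[of _ _ i]) (auto intro!: cSUP_upper bdd_above_finite)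

lemma diam_fun_nonneg: "0 \<le> diam_fun x t"
  using norm_le_diam_fun[of x i t i] by simp

lemma diam_fun_le: "(\<And>i j. norm (x i t - x j t) \<le> B) \<Longrightarrow> diam_fun x t \<le> B"
  unfolding diam_fun_def by (intro cSUP_least) auto

lemma diam_fun_less_iff: "diam_fun x t < B \<longleftrightarrow> (\<forall>i j. norm (x i t - x j t) < B)"
  unfolding diam_fun_def by (simp add: cSup_eq_Max)

lemma closed_diam_fun_ge:
  assumes "closed S" and "\<And>i. continuous_on S (x i)"
  shows "closed {t \<in> S. r \<le> diam_fun x t}"
proof -
  have "{t \<in> S. r \<le> diam_fun x t} = (\<Union>i. \<Union>j. {t \<in> S. r \<le> norm (x i t - x j t)})"
    by (auto simp: not_less[symmetric] diam_fun_less_iff)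
  moreover have "closed {t \<in> S. r \<le> norm (x i t - x j t)}" for i j
    by (intro continuous_on_closed_Collect_le continuous_intros assms)
  ultimately show ?thesis by (simp add: closed_UN)
qed

lemma norm_sum_scaleR_diff_le:
  fixes a b :: "'i \<Rightarrow> real" and w :: "'i \<Rightarrow> 'a::real_normed_vector"
  assumes A: "finite A" and a: "\<And>k. k \<in> A \<Longrightarrow> 0 \<le> a k" and b: "\<And>k. k \<in> A \<Longrightarrow> 0 \<le> b k"
    and sa: "sum a A = c" and sb: "sum b A = c"
    and w: "\<And>k l. k \<in> A \<Longrightarrow> l \<in> A \<Longrightarrow> norm (w k - w l) \<le> D"
  shows "norm ((\<Sum>k\<in>A. a k *\<^sub>R w k) - (\<Sum>k\<in>A. b k *\<^sub>R w k)) \<le> c * D"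
proof -
  have coupling: "c *\<^sub>R ((\<Sum>k\<in>A. a k *\<^sub>R w k) - (\<Sum>l\<in>A. b l *\<^sub>R w l))
      = (\<Sum>k\<in>A. \<Sum>l\<in>A. (a k * b l) *\<^sub>R (w k - w l))"
  proof -
    have "(\<Sum>k\<in>A. \<Sum>l\<in>A. (a k * b l) *\<^sub>R w k) = c *\<^sub>R (\<Sum>k\<in>A. a k *\<^sub>R w k)"
      by (simp add: scaleR_sum_right scaleR_sum_left[symmetric] sum_distrib_left[symmetric] sb mult.commute)
    moreover have "(\<Sum>k\<in>A. \<Sum>l\<in>A. (a k * b l) *\<^sub>R w l) = c *\<^sub>R (\<Sum>l\<in>A. b l *\<^sub>R w l)"
      by (subst sum.swap) (simp add: scaleR_sum_right scaleR_sum_left[symmetric] sum_distrib_right[symmetric] sa)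
    ultimately show ?thesis
      by (simp add: scaleR_diff_right sum_subtractf)
  qed
  have "c * norm ((\<Sum>k\<in>A. a k *\<^sub>R w k) - (\<Sum>l\<in>A. b l *\<^sub>R w l))
      \<le> (\<Sum>k\<in>A. \<Sum>l\<in>A. (a k * b l) * D)"
  proof -
    have "0 \<le> c" using sa sum_nonneg[of A a] a by simp
    then have "c * norm ((\<Sum>k\<in>A. a k *\<^sub>R w k) - (\<Sum>l\<in>A. b l *\<^sub>R w l))
        = norm (\<Sum>k\<in>A. \<Sum>l\<in>A. (a k * b l) *\<^sub>R (w k - w l))"
      by (simp flip: coupling)
    also have "\<dots> \<le> (\<Sum>k\<in>A. \<Sum>l\<in>A. (a k * b l) * D)"
      using a b w
      by (intro order_trans[OF norm_sum sum_mono] order_trans[OF norm_sum sum_mono])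
         (simp add: mult_left_mono)
    finally show ?thesis .
  qed
  also have "\<dots> = c * (c * D)"
    by (simp add: sum_distrib_right[symmetric] sum_distrib_left[symmetric] sa sb mult.assoc)
  finally have "c * norm ((\<Sum>k\<in>A. a k *\<^sub>R w k) - (\<Sum>l\<in>A. b l *\<^sub>R w l)) \<le> c * (c * D)" .
  moreover have "c = 0 \<Longrightarrow> (\<forall>k\<in>A. a k = 0) \<and> (\<forall>k\<in>A. b k = 0)"
    using sa sb a b A by (simp add: sum_nonneg_eq_0_iff)
  ultimately show ?thesis
    using sa sum_nonneg[of A a] a by (cases "c = 0") auto
qed

lemma dobrushin_le_sum_min: "dobrushin M \<le> (\<Sum>k\<in>UNIV. min (M $ i $ k) (M $ j $ k))"
  unfolding dobrushin_def
  by (rule cINF_lower2[where x=i]) (auto intro!: cINF_lower bdd_below_finite)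

lemma norm_diff_rows_le_dobrushin:
  fixes M :: "real^'n::finite^'n" and w :: "'n \<Rightarrow> 'a::real_normed_vector"
  assumes rows: "\<And>i. (\<Sum>k\<in>UNIV. M $ i $ k) = 1"
    and w: "\<And>k l. norm (w k - w l) \<le> D" and "0 \<le> D"
  shows "norm ((\<Sum>k\<in>UNIV. M $ i $ k *\<^sub>R w k) - (\<Sum>k\<in>UNIV. M $ j $ k *\<^sub>R w k))
           \<le> (1 - dobrushin M) * D"
proof -
  define m where "m k = min (M $ i $ k) (M $ j $ k)" for k
  have "(\<Sum>k\<in>UNIV. M $ i $ k *\<^sub>R w k) - (\<Sum>k\<in>UNIV. M $ j $ k *\<^sub>R w k)
      = (\<Sum>k\<in>UNIV. (M $ i $ k - m k) *\<^sub>R w k) - (\<Sum>k\<in>UNIV. (M $ j $ k - m k) *\<^sub>R w k)"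
    by (simp add: scaleR_diff_left sum_subtractf)
  also have "norm \<dots> \<le> (1 - sum m UNIV) * D"
    by (rule norm_sum_scaleR_diff_le[where A=UNIV, OF _ _ _ _ _ w]) (auto simp: m_def sum_subtractf rows)
  also have "\<dots> \<le> (1 - dobrushin M) * D"
    using dobrushin_le_sum_min[of M i j] \<open>0 \<le> D\<close> by (intro mult_right_mono) (auto simp: m_def)
  finally show ?thesis .
qed

lemma has_vector_derivative_mat_nth:
  fixes f :: "real \<Rightarrow> real^'n^'m"
  assumes "(f has_vector_derivative D) F"
  shows "((\<lambda>s. f s $ i $ k) has_vector_derivative D $ i $ k) F"
  using bounded_linear_vec_nth[THEN bounded_linear.has_vector_derivative,
      OF bounded_linear_vec_nth[THEN bounded_linear.has_vector_derivative, OF assms]] .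

lemma backward_propagator_apply:
  fixes w :: "'n::finite \<Rightarrow> real \<Rightarrow> 'a::real_normed_vector"
    and P :: "real \<Rightarrow> real \<Rightarrow> real^'n^'n" and A :: "real \<Rightarrow> real^'n^'n"
  assumes "a \<le> t" and P_diag: "P t t = mat 1"
    and P_ds: "\<And>s. s \<in> {a..t} \<Longrightarrow>
        ((\<lambda>\<sigma>. P \<sigma> t) has_vector_derivative - (P s t ** A s)) (at s within {a..t})"
    and w_ode: "\<And>k s. s \<in> {a..t} \<Longrightarrow>
        (w k has_vector_derivative (\<Sum>j\<in>UNIV. A s $ k $ j *\<^sub>R w j s)) (at s within {a..t})"
  shows "w i t = (\<Sum>k\<in>UNIV. P a t $ i $ k *\<^sub>R w k a)"
proof -
  define g where "g s = (\<Sum>k\<in>UNIV. P s t $ i $ k *\<^sub>R w k s)" for s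
  have "(g has_vector_derivative 0) (at s within {a..t})" if s: "s \<in> {a..t}" for s
  proof -
    have "(g has_vector_derivative (\<Sum>k\<in>UNIV. P s t $ i $ k *\<^sub>R (\<Sum>j\<in>UNIV. A s $ k $ j *\<^sub>R w j s)
            + (- (P s t ** A s)) $ i $ k *\<^sub>R w k s)) (at s within {a..t})"
      unfolding g_def
      using has_vector_derivative_mat_nth[OF P_ds] w_ode s
      by (intro has_vector_derivative_sum has_vector_derivative_scaleR)
         (auto simp: has_real_derivative_iff_has_vector_derivative)
    moreover have "(\<Sum>k\<in>UNIV. P s t $ i $ k *\<^sub>R (\<Sum>j\<in>UNIV. A s $ k $ j *\<^sub>R w j s))
        = (\<Sum>k\<in>UNIV. (P s t ** A s) $ i $ k *\<^sub>R w k s)"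
    proof -
      have "(\<Sum>k\<in>UNIV. P s t $ i $ k *\<^sub>R (\<Sum>j\<in>UNIV. A s $ k $ j *\<^sub>R w j s))
          = (\<Sum>k\<in>UNIV. \<Sum>j\<in>UNIV. (P s t $ i $ k * A s $ k $ j) *\<^sub>R w j s)"
        by (simp add: scaleR_sum_right)
      also have "\<dots> = (\<Sum>j\<in>UNIV. \<Sum>k\<in>UNIV. (P s t $ i $ k * A s $ k $ j) *\<^sub>R w j s)"
        by (rule sum.swap)
      also have "\<dots> = (\<Sum>j\<in>UNIV. (P s t ** A s) $ i $ j *\<^sub>R w j s)"
        by (simp add: matrix_matrix_mult_def scaleR_sum_left)
      finally show ?thesis .
    qed
    ultimately show ?thesis
      by (simp add: sum_subtractf)
  qed
  then obtain c where "\<And>s. s \<in> {a..t} \<Longrightarrow> g s = c"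
    by (rule has_vector_derivative_zero_constant[OF convex_real_interval(5)]) blast+
  then have "g t = g a" using \<open>a \<le> t\<close> by auto
  moreover have "g t = w i t"
    by (simp add: g_def P_diag mat_def if_distrib[of "\<lambda>c. c *\<^sub>R _"] cong: if_cong)
  ultimately show ?thesis by (simp add: g_def)
qed

lemma backward_propagator_row_sum:
  fixes P :: "real \<Rightarrow> real \<Rightarrow> real^'n::finite^'n" and A :: "real \<Rightarrow> real^'n^'n"
  assumes "a \<le> t" and "P t t = mat 1"
    and "\<And>s. s \<in> {a..t} \<Longrightarrow>
        ((\<lambda>\<sigma>. P \<sigma> t) has_vector_derivative - (P s t ** A s)) (at s within {a..t})"
    and A_rows: "\<And>s k. (\<Sum>j\<in>UNIV. A s $ k $ j) = 0"
  shows "(\<Sum>k\<in>UNIV. P a t $ i $ k) = 1"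
proof -
  have "(1::real) = (\<Sum>k\<in>UNIV. P a t $ i $ k *\<^sub>R 1)"
    by (rule backward_propagator_apply[where A=A]) (use assms in simp_all)
  then show ?thesis by simp
qed

lemma sum_Qmat_row: "(\<Sum>j\<in>UNIV. Qmat \<Psi> x v t $ i $ j) = 0"
proof -
  have "(\<Sum>j\<in>UNIV - {i}. Qmat \<Psi> x v t $ i $ j) = (\<Sum>j\<in>UNIV - {i}. \<Psi> i j (config x v t))"
    by (intro sum.cong) (auto simp: Qmat_def)
  then show ?thesis
    by (simp add: sum.remove[of UNIV i] Qmat_def)
qed

lemma velocity_diam_le_dobrushin:
  fixes \<Psi> :: "'n::finite \<Rightarrow> 'n \<Rightarrow> ((real^'d::finite) \<times> (real^'d))^'n \<Rightarrow> real"
    and x v :: "'n \<Rightarrow> real \<Rightarrow> real^'d" and P :: "real \<Rightarrow> real \<Rightarrow> real^'n^'n"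
  assumes v_ode: "\<And>i t. t \<ge> 0 \<Longrightarrow> (v i has_vector_derivative
               (\<alpha> *\<^sub>R (\<Sum>j\<in>UNIV. Qmat \<Psi> x v t $ i $ j *\<^sub>R (v j t - v i t)))) (at t within {0..})"
    and P_diag: "P t t = mat 1"
    and P_ds: "\<And>s. 0 \<le> s \<Longrightarrow> s \<le> t \<Longrightarrow>
               ((\<lambda>\<sigma>. P \<sigma> t) has_vector_derivative (- (\<alpha> *\<^sub>R (P s t ** Qmat \<Psi> x v s)))) (at s within {0..t})"
    and "0 \<le> t"
  shows "diam_fun v t \<le> (1 - dobrushin (P 0 t)) * diam_fun v 0"
proof -
  define A where "A s = \<alpha> *\<^sub>R Qmat \<Psi> x v s" for s
  have A_rows: "(\<Sum>j\<in>UNIV. A s $ k $ j) = 0" for s k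
    by (simp add: A_def sum_distrib_left[symmetric] sum_Qmat_row)
  have P_ds': "((\<lambda>\<sigma>. P \<sigma> t) has_vector_derivative - (P s t ** A s)) (at s within {0..t})"
    if "s \<in> {0..t}" for s
    using P_ds that by (simp add: A_def matrix_scalar_ac scalar_matrix_assoc)
  have v_ode': "(v k has_vector_derivative (\<Sum>j\<in>UNIV. A s $ k $ j *\<^sub>R v j s)) (at s within {0..t})"
    if "s \<in> {0..t}" for k s
  proof -
    have "\<alpha> *\<^sub>R (\<Sum>j\<in>UNIV. Qmat \<Psi> x v s $ k $ j *\<^sub>R (v j s - v k s))
        = (\<Sum>j\<in>UNIV. A s $ k $ j *\<^sub>R v j s) - (\<Sum>j\<in>UNIV. A s $ k $ j) *\<^sub>R v k s"
      by (simp add: A_def scaleR_diff_right sum_subtractf scaleR_sum_left scaleR_sum_right)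
    then show ?thesis
      using v_ode[of s k] that by (auto simp: A_rows intro: has_vector_derivative_within_subset)
  qed
  have v_eq: "v i t = (\<Sum>k\<in>UNIV. P 0 t $ i $ k *\<^sub>R v k 0)" for i
    by (rule backward_propagator_apply[where A=A]) (use \<open>0 \<le> t\<close> P_diag P_ds' v_ode' in auto)
  have P_rows: "(\<Sum>k\<in>UNIV. P 0 t $ i $ k) = 1" for i
    by (rule backward_propagator_row_sum[where A=A]) (use \<open>0 \<le> t\<close> P_diag P_ds' A_rows in auto)
  have "norm (v i t - v j t) \<le> (1 - dobrushin (P 0 t)) * diam_fun v 0" for i j
    unfolding v_eq by (intro norm_diff_rows_le_dobrushin P_rows norm_le_diam_fun diam_fun_nonneg)
  then show ?thesis
    by (rule diam_fun_le)
qed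

lemma norm_diff_le_integral_of_derivative_bound:
  fixes f f' :: "real \<Rightarrow> 'a::banach"
  assumes "a \<le> b"
    and f': "\<And>s. s \<in> {a..b} \<Longrightarrow> (f has_vector_derivative f' s) (at s within {a..b})"
    and g: "g integrable_on {a..b}"
    and bound: "\<And>s. s \<in> {a..<b} \<Longrightarrow> norm (f' s) \<le> g s"
  shows "norm (f b - f a) \<le> integral {a..b} g"
proof -
  define h where "h s = (if s = b then 0 else f' s)" for s
  define k where "k s = (if s = b then 0 else g s)" for s
  have "(f' has_integral (f b - f a)) {a..b}"
    by (rule fundamental_theorem_of_calculus[OF \<open>a \<le> b\<close> f'])
  then have h_int: "(h has_integral (f b - f a)) {a..b}"
    by (rule has_integral_spike_finite[where S="{b}", rotated 2]) (auto simp: h_def)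
  have k_int: "(k has_integral integral {a..b} g) {a..b}"
    using integrable_integral[OF g]
    by (rule has_integral_spike_finite[where S="{b}", rotated 2]) (auto simp: k_def)
  have "norm (integral {a..b} h) \<le> integral {a..b} k"
    using bound
    by (intro integral_norm_bound_integral has_integral_integrable[OF h_int]
        has_integral_integrable[OF k_int]) (auto simp: h_def k_def)
  then show ?thesis
    using integral_unique[OF h_int] integral_unique[OF k_int] by simp
qed

lemma diam_fun_le_add_integral:
  assumes "a \<le> b"
    and x_ode: "\<And>i s. s \<in> {a..b} \<Longrightarrow> (x i has_vector_derivative v i s) (at s within {a..b})"
    and g: "g integrable_on {a..b}"
    and v_bound: "\<And>s. s \<in> {a..<b} \<Longrightarrow> diam_fun v s \<le> g s"
  shows "diam_fun x b \<le> diam_fun x a + integral {a..b} g"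
proof (rule diam_fun_le)
  fix i j
  have "norm ((x i b - x j b) - (x i a - x j a)) \<le> integral {a..b} g"
  proof (rule norm_diff_le_integral_of_derivative_bound[OF \<open>a \<le> b\<close> _ g])
    show "((\<lambda>s. x i s - x j s) has_vector_derivative v i s - v j s) (at s within {a..b})"
      if "s \<in> {a..b}" for s
      using that by (intro has_vector_derivative_diff x_ode)
    show "norm (v i s - v j s) \<le> g s" if "s \<in> {a..<b}" for s
      using norm_le_diam_fun[of v i s j] v_bound[OF that] by linarith
  qed
  then show "norm (x i b - x j b) \<le> diam_fun x a + integral {a..b} g"
    using norm_triangle_sub[of "x i b - x j b" "x i a - x j a"] norm_le_diam_fun[of x i a j]
    by linarith
qed

lemma nonneg_real_induct_closed:
  assumes closed: "closed {t \<in> {0..}. \<not> P t}"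
    and step: "\<And>\<tau>. 0 \<le> \<tau> \<Longrightarrow> (\<And>s. 0 \<le> s \<Longrightarrow> s < \<tau> \<Longrightarrow> P s) \<Longrightarrow> P \<tau>"
    and "0 \<le> t"
  shows "P (t::real)"
proof (rule ccontr)
  define B where "B = {t \<in> {0..}. \<not> P t}"
  assume "\<not> P t"
  then have "B \<noteq> {}" using \<open>0 \<le> t\<close> by (auto simp: B_def)
  moreover have "bdd_below B" by (auto simp: B_def intro: bdd_belowI[where m=0])
  ultimately have "Inf B \<in> B" using closed unfolding B_def[symmetric]
    by (intro closed_contains_Inf)
  moreover have "P s" if "0 \<le> s" "s < Inf B" for s
    using cInf_lower[OF _ \<open>bdd_below B\<close>, of s] that by (force simp: B_def)
  ultimately show False using step by (auto simp: B_def)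
qed

lemma diam_fun_less_bootstrap:
  assumes x_ode: "\<And>i t. t \<ge> 0 \<Longrightarrow> (x i has_vector_derivative v i t) (at t within {0..})"
    and v_bound: "\<And>t. 0 \<le> t \<Longrightarrow> (\<And>s. 0 \<le> s \<Longrightarrow> s \<le> t \<Longrightarrow> diam_fun x s < r) \<Longrightarrow>
                    diam_fun v t \<le> g t"
    and g_int: "g integrable_on {0..}" and g_nonneg: "\<And>t. 0 \<le> t \<Longrightarrow> 0 \<le> g t"
    and margin: "diam_fun x 0 + integral {0..} g < r"
    and "0 \<le> t"
  shows "diam_fun x t < r"
proof (rule nonneg_real_induct_closed[OF _ _ \<open>0 \<le> t\<close>])
  have "continuous_on {0..} (x i)" for i
    using x_ode by (auto simp: continuous_on_eq_continuous_within intro: has_vector_derivative_continuous)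
  then show "closed {t \<in> {0..}. \<not> diam_fun x t < r}"
    unfolding not_less by (intro closed_diam_fun_ge closed_atLeast)
next
  fix \<tau> :: real
  assume "0 \<le> \<tau>" and below: "\<And>s. 0 \<le> s \<Longrightarrow> s < \<tau> \<Longrightarrow> diam_fun x s < r"
  have "diam_fun x \<tau> \<le> diam_fun x 0 + integral {0..\<tau>} g"
  proof (rule diam_fun_le_add_integral[OF \<open>0 \<le> \<tau>\<close>])
    show "(x i has_vector_derivative v i s) (at s within {0..\<tau>})" if "s \<in> {0..\<tau>}" for i s
      using x_ode[of s i] that by (auto intro: has_vector_derivative_within_subset)
    show "g integrable_on {0..\<tau>}"
      by (rule integrable_on_subinterval[OF g_int]) auto
    show "diam_fun v s \<le> g s" if "s \<in> {0..<\<tau>}" for s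
    proof (rule v_bound)
      show "diam_fun x s' < r" if "0 \<le> s'" "s' \<le> s" for s'
        using below that \<open>s \<in> {0..<\<tau>}\<close> by simp
    qed (use that in simp)
  qed
  also have "\<dots> \<le> diam_fun x 0 + integral {0..} g"
    using g_nonneg
    by (intro add_left_mono integral_subset_le integrable_on_subinterval[OF g_int] g_int) auto
  finally show "diam_fun x \<tau> < r"
    using margin by linarith
qed

lemma mono_on_SUP_le:
  fixes f :: "real \<Rightarrow> 'b::order" and h :: "'a \<Rightarrow> real"
  assumes "mono_on {0..} f" and "S \<noteq> {}" and "\<And>s. s \<in> S \<Longrightarrow> 0 \<le> h s \<and> h s \<le> r"
  shows "f (SUP s\<in>S. h s) \<le> f r"
proof (rule mono_onD[OF assms(1)])
  obtain s where "s \<in> S" using \<open>S \<noteq> {}\<close> by blast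
  then show "(SUP s\<in>S. h s) \<in> {0..}"
    using assms(3) by (auto intro!: cSUP_upper2 bdd_aboveI2[where M=r])
  show "(SUP s\<in>S. h s) \<le> r"
    using assms(2,3) by (intro cSUP_least) auto
  then show "r \<in> {0..}"
    using \<open>(SUP s\<in>S. h s) \<in> {0..}\<close> by simp
qed

theorem proposition4p3:
  fixes \<alpha> :: real
    and \<Psi> :: "'n::finite \<Rightarrow> 'n \<Rightarrow> ((real^'d::finite) \<times> (real^'d))^'n \<Rightarrow> real"
    and x v :: "'n \<Rightarrow> real \<Rightarrow> real^'d"
    and P :: "real \<Rightarrow> real \<Rightarrow> real^'n^'n"
    and C :: "real \<Rightarrow> real \<Rightarrow> real"
  assumes alpha_pos: "\<alpha> > 0"
    and Psi_nonneg: "\<And>i j z. i \<noteq> j \<Longrightarrow> \<Psi> i j z \<ge> 0"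
    and Psi_bounded: "\<And>i j. i \<noteq> j \<Longrightarrow> bounded (range (\<Psi> i j))"
    and Psi_loclip: "\<And>i j. i \<noteq> j \<Longrightarrow> locally_lipschitz (\<Psi> i j)"
    and x_ode: "\<And>i t. t \<ge> 0 \<Longrightarrow> (x i has_vector_derivative v i t) (at t within {0..})"
    and v_ode: "\<And>i t. t \<ge> 0 \<Longrightarrow> (v i has_vector_derivative
               (\<alpha> *\<^sub>R (\<Sum>j\<in>UNIV. Qmat \<Psi> x v t $ i $ j *\<^sub>R (v j t - v i t)))) (at t within {0..})"
    and P_diag: "\<And>t. t \<ge> 0 \<Longrightarrow> P t t = mat 1"
    and P_dt: "\<And>s t. 0 \<le> s \<Longrightarrow> s \<le> t \<Longrightarrow>
               ((\<lambda>\<tau>. P s \<tau>) has_vector_derivative (\<alpha> *\<^sub>R (Qmat \<Psi> x v t ** P s t))) (at t within {s..})"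
    and P_ds: "\<And>s t. 0 \<le> s \<Longrightarrow> s \<le> t \<Longrightarrow>
               ((\<lambda>\<sigma>. P \<sigma> t) has_vector_derivative (- (\<alpha> *\<^sub>R (P s t ** Qmat \<Psi> x v s)))) (at s within {0..t})"
    and C_nonneg: "\<And>t r. t \<ge> 0 \<Longrightarrow> r \<ge> 0 \<Longrightarrow> C t r \<ge> 0"
    and C_mono: "\<And>t. t \<ge> 0 \<Longrightarrow> mono_on {0..} (C t)"
    and C_lim: "\<And>r. r \<ge> diam_fun x 0 \<Longrightarrow> ((\<lambda>t. C t r) \<longlongrightarrow> 0) at_top"
    and C_bound: "\<And>t. t \<ge> 0 \<Longrightarrow> 1 - dobrushin (P 0 t) \<le> C t (SUP s\<in>{0..t}. diam_fun x s)"
    and r0: "\<exists>r0 \<ge> diam_fun x 0. (\<lambda>s. C s r0) integrable_on {0..} \<and>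
               r0 - diam_fun x 0 > diam_fun v 0 * integral {0..} (\<lambda>s. C s r0)"
  shows "bdd_above (diam_fun x ` {0..}) \<and> ((\<lambda>t. diam_fun v t) \<longlongrightarrow> 0) at_top"
proof -
  obtain r0 where "diam_fun x 0 \<le> r0" and C_int: "(\<lambda>s. C s r0) integrable_on {0..}"
    and margin: "diam_fun v 0 * integral {0..} (\<lambda>s. C s r0) < r0 - diam_fun x 0"
    using r0 by blast
  then have "0 \<le> r0" using diam_fun_nonneg[of x 0] by linarith
  have v_decay: "diam_fun v t \<le> diam_fun v 0 * C t r0"
    if "0 \<le> t" and confined: "\<And>s. 0 \<le> s \<Longrightarrow> s \<le> t \<Longrightarrow> diam_fun x s < r0" for t
  proof -
    have "C t (SUP s\<in>{0..t}. diam_fun x s) \<le> C t r0"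
      using confined \<open>0 \<le> t\<close> diam_fun_nonneg
      by (intro mono_on_SUP_le[OF C_mono[OF \<open>0 \<le> t\<close>]]) (auto intro: less_imp_le)
    then have "1 - dobrushin (P 0 t) \<le> C t r0"
      using C_bound[OF \<open>0 \<le> t\<close>] by linarith
    have "diam_fun v t \<le> (1 - dobrushin (P 0 t)) * diam_fun v 0"
      using velocity_diam_le_dobrushin[where P=P and t=t, OF v_ode P_diag[OF \<open>0 \<le> t\<close>] P_ds \<open>0 \<le> t\<close>] .
    also have "\<dots> \<le> C t r0 * diam_fun v 0"
      using \<open>1 - dobrushin (P 0 t) \<le> C t r0\<close> by (intro mult_right_mono diam_fun_nonneg)
    finally show ?thesis by (simp add: mult.commute)
  qed
  have confined: "diam_fun x t < r0" if "0 \<le> t" for t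
  proof (rule diam_fun_less_bootstrap[OF x_ode v_decay _ _ _ that])
    show "(\<lambda>s. diam_fun v 0 * C s r0) integrable_on {0..}"
      using C_int by (rule integrable_on_mult_right)
    show "0 \<le> diam_fun v 0 * C s r0" if "0 \<le> s" for s
      using C_nonneg[OF that \<open>0 \<le> r0\<close>] diam_fun_nonneg[of v 0] by simp
    show "diam_fun x 0 + integral {0..} (\<lambda>s. diam_fun v 0 * C s r0) < r0"
      using margin by simp
  qed
  have "((\<lambda>t. diam_fun v t) \<longlongrightarrow> 0) at_top"
  proof (rule tendsto_sandwich[where f="\<lambda>_. 0" and h="\<lambda>t. diam_fun v 0 * C t r0"])
    show "\<forall>\<^sub>F t in at_top. diam_fun v t \<le> diam_fun v 0 * C t r0"
      using v_decay confined by (auto simp: eventually_at_top_linorder)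
    show "((\<lambda>t. diam_fun v 0 * C t r0) \<longlongrightarrow> 0) at_top"
      using tendsto_mult_right_zero[OF C_lim[OF \<open>diam_fun x 0 \<le> r0\<close>]] by simp
  qed (simp_all add: diam_fun_nonneg)
  moreover have "bdd_above (diam_fun x ` {0..})"
    using confined by (intro bdd_aboveI2[where M=r0]) (auto intro: less_imp_le)
  ultimately show ?thesis by blast
qed

end
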